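(* Let $s\in(0,1)$, $p\ge1$, set $\kappa_*=\frac{N}{N-sp}$ if $sp<N$ and $\kappa_*=2$ if $sp\ge N$, and $\kappa=1+\frac{2(\kappa_*-1)}{p\kappa_*}$. There exists $C=C(s,p,N)>0$ such that for every $R>0$, $d\in(0,1)$, $t_1<t_2$, and every $u\in L^p(t_1,t_2;W^{s,p}(K_R))\cap L^\infty(t_1,t_2;L^2(K_R))$ with $u(\cdot,t)$ compactly supported in $K_{(1-d)R}$ for a.e. $t\in(t_1,t_2)$, $$\int_{t_1}^{t_2}\!\int_{K_R}|u|^{\kappa p}dxdt\le C\Big(R^{sp}\int_{t_1}^{t_2}\!\int_{K_R}\!\int_{K_R}\frac{|u(x,t)-u(y,t)|^p}{|x-y|^{N+sp}}dxdydt+\frac{1}{d^{N+sp}}\int_{t_1}^{t_2}\!\int_{K_R}|u|^pdxdt\Big)\Big(\operatorname*{ess\,sup}_{t_1<t<t_2}\frac{1}{|K_R|}\int_{K_R}|u(x,t)|^2dx\Big)^{\frac{\kappa_*-1}{\kappa_*}}.$$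
   Context: $W^{s,p}(K_R)=\{v\in L^p(K_R):\int_{K_R}\int_{K_R}|v(x)-v(y)|^p|x-y|^{-N-sp}dxdy<\infty\}$; $K_R$ and $K_{(1-d)R}$ are concentric open balls in $\mathbb R^N$. *)

theory Defs
  imports "HOL-Analysis.Analysis" "HOL-Probability.Essential_Supremum"
begin

definition kappa_star :: "nat \<Rightarrow> real \<Rightarrow> real \<Rightarrow> real" where
  "kappa_star N s p = (if s * p < real N then real N / (real N - s * p) else 2)"

definition kappa :: "nat \<Rightarrow> real \<Rightarrow> real \<Rightarrow> real" where
  "kappa N s p = 1 + 2 * (kappa_star N s p - 1) / (p * kappa_star N s p)"

definition par_gagliardo :: "('a::euclidean_space \<Rightarrow> real \<Rightarrow> real) \<Rightarrow> 'a set \<Rightarrow> real set \<Rightarrow> real \<Rightarrow> real \<Rightarrow> ennreal" where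
  "par_gagliardo u K I s p =
     (\<integral>\<^sup>+ t. (\<integral>\<^sup>+ x. (\<integral>\<^sup>+ y.
        ennreal (\<bar>u x t - u y t\<bar> powr p / norm (x - y) powr (real DIM('a) + s * p))
        * indicator K y \<partial>lborel) * indicator K x \<partial>lborel) * indicator I t \<partial>lborel)"

definition par_Lq :: "('a::euclidean_space \<Rightarrow> real \<Rightarrow> real) \<Rightarrow> 'a set \<Rightarrow> real set \<Rightarrow> real \<Rightarrow> ennreal" where
  "par_Lq u K I q =
     (\<integral>\<^sup>+ t. (\<integral>\<^sup>+ x. ennreal (\<bar>u x t\<bar> powr q) * indicator K x \<partial>lborel) * indicator I t \<partial>lborel)"

definition par_esssup_L2_avg :: "('a::euclidean_space \<Rightarrow> real \<Rightarrow> real) \<Rightarrow> 'a set \<Rightarrow> real set \<Rightarrow> ennreal" where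
  "par_esssup_L2_avg u K I =
     esssup (restrict_space lborel I)
       (\<lambda>t. (\<integral>\<^sup>+ x. ennreal ((u x t)\<^sup>2) * indicator K x \<partial>lborel) / ennreal (measure lborel K))"

end

theory Submission
  imports Defs
begin

text \<open>Fix a time t, write v = u(-, t) and let a = |v(x)| > 0 at a point x of the support, so that the
  ball B(x, dR) lies in K_R. Every ball B(x, r) inside K_R is covered by the points where
  |v(x) - v(y)| \<ge> a/2 and those where |v(y)| \<ge> a/2. Chebyshev's inequality bounds the first set by
  (2/a)^p r^(N+sp) G(x), where G(x) is the inner Gagliardo integral at x, and the second by
  4 a^(-2) times the integral of v^2 over K_R, which is at most m |K_R|. Take r such that the second
  bound is half the volume of B(x, r); then a^2 is comparable to m (R/r)^N. If r \<le> dR, the first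
  bound controls a^p by r^(sp) G(x), and a^\<alpha> by (R/r)^(\<alpha>N/2), where \<alpha> = \<kappa>p - p satisfies
  \<alpha>N/2 \<le> sp; if r > dR, then a^2 \<le> 8 m d^(-N). Either way
  |v(x)|^(p+\<alpha>) \<le> C m^(\<alpha>/2) (R^(sp) G(x) + d^(-N-sp) |v(x)|^p), and integrating over x and t
  gives the inequality.\<close>

definition kappa_gain :: "nat \<Rightarrow> real \<Rightarrow> real \<Rightarrow> real" where
  "kappa_gain N s p = 2 * (kappa_star N s p - 1) / kappa_star N s p"

lemma kappa_star_gt_1:
  assumes "0 < s" "0 < p"
  shows "1 < kappa_star N s p"
  using assms by (simp add: kappa_star_def field_simps)

lemma kappa_gain_pos:
  assumes "0 < s" "0 < p"
  shows "0 < kappa_gain N s p"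
  using kappa_star_gt_1[OF assms, of N] by (simp add: kappa_gain_def)

lemma kappa_gain_dim_le:
  assumes "0 < s" "0 < p"
  shows "kappa_gain N s p * real N / 2 \<le> s * p"
proof (cases "s * p < real N")
  case True
  moreover have "0 < real N"
    using True mult_pos_pos[OF assms] by linarith
  ultimately have "kappa_gain N s p = 2 * (s * p) / real N"
    by (simp add: kappa_gain_def kappa_star_def field_simps)
  then show ?thesis
    using True assms by simp
next
  case False
  then show ?thesis
    by (simp add: kappa_gain_def kappa_star_def)
qed

lemma kappa_mult_eq:
  assumes "0 < s" "0 < p"
  shows "kappa N s p * p = p + kappa_gain N s p"
proof -
  have "kappa_star N s p \<noteq> 0"
    using kappa_star_gt_1[OF assms, of N] by simp
  then show ?thesis
    using assms by (simp add: kappa_def kappa_gain_def field_simps)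
qed

lemma powr_le_of_sq_le:
  fixes a m x al n :: real
  assumes "0 < a" "0 \<le> m" "0 < x" "0 \<le> al" "a\<^sup>2 \<le> 8 * m * x powr n"
  shows "a powr al \<le> 8 powr (al / 2) * m powr (al / 2) * x powr (al * n / 2)"
proof -
  have "a powr al = (a powr 2) powr (al / 2)"
    by (simp add: powr_powr)
  also have "\<dots> = (a\<^sup>2) powr (al / 2)"
    using assms(1) by (simp add: powr_numeral)
  also have "\<dots> \<le> (8 * m * x powr n) powr (al / 2)"
    using assms by (intro powr_mono2) auto
  also have "\<dots> = 8 powr (al / 2) * m powr (al / 2) * (x powr n) powr (al / 2)"
    using assms(2) by (simp add: powr_mult)
  also have "(x powr n) powr (al / 2) = x powr (al * n / 2)"
    by (simp add: powr_powr mult.commute)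
  finally show ?thesis .
qed

lemma powr_le_of_radius_estimate:
  fixes a w r g Q p s n :: real
  assumes "0 < a" "0 < w" "0 < r"
    and est: "w * r powr n \<le> (2 / a) powr p * r powr (n + s * p) * g + 4 * Q / a\<^sup>2"
    and large: "8 * Q / a\<^sup>2 \<le> w * r powr n"
  shows "a powr p \<le> 2 powr (p + 1) / w * r powr (s * p) * g"
proof -
  have "8 * Q / a\<^sup>2 = 2 * (4 * Q / a\<^sup>2)"
    by simp
  moreover have "w * r powr n \<le> r powr n * ((2 / a) powr p * r powr (s * p) * g) + 4 * Q / a\<^sup>2"
    using est by (simp add: powr_add mult_ac)
  ultimately have "w * r powr n \<le> 2 * (r powr n * ((2 / a) powr p * r powr (s * p) * g))"
    using large by linarith
  then have "r powr n * w \<le> r powr n * (2 * ((2 / a) powr p * r powr (s * p) * g))"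
    by (simp add: mult_ac)
  then have "w / 2 \<le> (2 / a) powr p * r powr (s * p) * g"
    using assms(3) by (simp add: mult_le_cancel_left_pos)
  then have "a powr p * (w / 2) \<le> a powr p * (2 / a) powr p * (r powr (s * p) * g)"
    using assms(1) by (simp add: mult_left_mono mult.assoc)
  also have "a powr p * (2 / a) powr p = 2 powr p"
    using assms(1) by (simp add: powr_divide)
  finally show ?thesis
    using assms(2) by (simp add: powr_add field_simps)
qed

lemma powr_le_at_fitting_radius:
  fixes a g r R m al n s p c :: real
  assumes a: "0 < a" and g: "0 \<le> g" and r: "0 < r" "r \<le> R" and m: "0 \<le> m" and c: "0 \<le> c"
    and al: "0 \<le> al" "al * n / 2 \<le> s * p"
    and ap: "a powr p \<le> c * r powr (s * p) * g" and sq: "a\<^sup>2 \<le> 8 * m * (R / r) powr n"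
  shows "a powr (p + al) \<le> c * 8 powr (al / 2) * m powr (al / 2) * R powr (s * p) * g"
proof -
  have aal: "a powr al \<le> 8 powr (al / 2) * m powr (al / 2) * (R / r) powr (al * n / 2)"
    using powr_le_of_sq_le[OF a m _ al(1) sq] r by simp
  have "1 \<le> R / r"
    using r by simp
  then have "r powr (s * p) * (R / r) powr (al * n / 2) \<le> r powr (s * p) * (R / r) powr (s * p)"
    using al(2) by (intro mult_left_mono powr_mono) auto
  also have "\<dots> = R powr (s * p)"
    using r by (simp add: powr_divide)
  finally have radii: "r powr (s * p) * (R / r) powr (al * n / 2) \<le> R powr (s * p)" .
  have "a powr (p + al) = a powr p * a powr al"
    by (simp add: powr_add)
  also have "\<dots> \<le> (c * r powr (s * p) * g) * (8 powr (al / 2) * m powr (al / 2) * (R / r) powr (al * n / 2))"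
    using ap aal c g by (intro mult_mono) auto
  also have "\<dots> = c * 8 powr (al / 2) * m powr (al / 2) * g * (r powr (s * p) * (R / r) powr (al * n / 2))"
    by (simp only: ac_simps)
  also have "\<dots> \<le> c * 8 powr (al / 2) * m powr (al / 2) * g * R powr (s * p)"
    using radii c g by (intro mult_left_mono) auto
  finally show ?thesis
    by (simp only: ac_simps)
qed

lemma powr_le_at_large_radius:
  fixes a d m al n s p :: real
  assumes a: "0 < a" and d: "0 < d" "d \<le> 1" and m: "0 \<le> m" and n: "0 \<le> n"
    and al: "0 \<le> al" "al * n / 2 \<le> s * p" and sq: "a\<^sup>2 \<le> 8 * m * (1 / d) powr n"
  shows "a powr (p + al) \<le> 8 powr (al / 2) * m powr (al / 2) * (a powr p / d powr (n + s * p))"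
proof -
  have "a powr al \<le> 8 powr (al / 2) * m powr (al / 2) * (1 / d) powr (al * n / 2)"
    using powr_le_of_sq_le[OF a m _ al(1) sq] d by simp
  also have "\<dots> \<le> 8 powr (al / 2) * m powr (al / 2) * (1 / d) powr (n + s * p)"
    using d al n by (intro mult_left_mono powr_mono) auto
  finally have "a powr p * a powr al \<le> a powr p * (8 powr (al / 2) * m powr (al / 2) * (1 / d) powr (n + s * p))"
    by (intro mult_left_mono) auto
  then show ?thesis
    using d by (simp add: powr_add powr_divide mult_ac)
qed

lemma sq_le_of_balanced_radius:
  fixes a w r Q m R \<rho> n :: real
  assumes a: "0 < a" and w: "0 < w" and r: "0 < r" and Q: "0 \<le> Q" and R: "0 \<le> R" and n: "0 \<le> n"
    and rn: "w * r powr n = 8 * Q / a\<^sup>2" and mass: "Q \<le> m * (w * R powr n)"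
    and \<rho>: "0 < \<rho>" "\<rho> \<le> r"
  shows "a\<^sup>2 \<le> 8 * m * (R / \<rho>) powr n"
proof -
  have "a\<^sup>2 = 8 * Q / (w * r powr n)"
    using rn a w r by (simp add: divide_simps mult.commute)
  also have "\<dots> \<le> 8 * Q / (w * \<rho> powr n)"
    using \<rho> Q w n by (intro divide_left_mono mult_left_mono powr_mono2) auto
  also have "\<dots> \<le> 8 * (m * (w * R powr n)) / (w * \<rho> powr n)"
    using mass \<rho> w by (intro divide_right_mono) auto
  also have "\<dots> = 8 * m * (R / \<rho>) powr n"
    using \<rho> w R by (simp add: powr_divide)
  finally show ?thesis .
qed

lemma powr_interpolation_of_radius_estimates:
  fixes a Q g w R d s p al n m :: real
  assumes a: "0 < a" and Q: "0 < Q" and g: "0 \<le> g" and w: "0 < w" and R: "0 < R"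
    and d: "0 < d" "d \<le> 1" and n: "0 < n" and al: "0 \<le> al" "al * n / 2 \<le> s * p"
    and mass: "Q \<le> m * (w * R powr n)"
    and est: "\<And>r. 0 < r \<Longrightarrow> r \<le> d * R \<Longrightarrow>
      w * r powr n \<le> (2 / a) powr p * r powr (n + s * p) * g + 4 * Q / a\<^sup>2"
  shows "a powr (p + al) \<le> 8 powr (al / 2) * (1 + 2 powr (p + 1) / w) * m powr (al / 2)
           * (R powr (s * p) * g + a powr p / d powr (n + s * p))"
proof -
  define c where "c = 2 powr (p + 1) / w"
  define X where "X = R powr (s * p) * g"
  define Y where "Y = a powr p / d powr (n + s * p)"
  have c: "0 \<le> c" and X: "0 \<le> X" and Y: "0 \<le> Y"
    using w g by (simp_all add: c_def X_def Y_def)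
  have "0 < m * (w * R powr n)" "0 < w * R powr n"
    using Q mass w R by auto
  then have m: "0 < m"
    by (simp add: zero_less_mult_iff)
  \<comment> \<open>The radius at which the L^2 term of the estimate is half the volume of the ball.\<close>
  define r where "r = (8 * Q / (w * a\<^sup>2)) powr (1 / n)"
  have r: "0 < r"
    using Q w a by (simp add: r_def)
  have rn: "w * r powr n = 8 * Q / a\<^sup>2"
    using Q w a n by (simp add: r_def powr_powr)
  note sq_bound = sq_le_of_balanced_radius[OF a w r less_imp_le[OF Q] less_imp_le[OF R] less_imp_le[OF n] rn mass]
  have "a powr (p + al) \<le> 8 powr (al / 2) * m powr (al / 2) * (c * X + Y)"
  proof (cases "r \<le> d * R")
    case True
    moreover have "d * R \<le> 1 * R"
      using d R by (intro mult_right_mono) auto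
    ultimately have r_le: "r \<le> R"
      by simp
    have ap: "a powr p \<le> c * r powr (s * p) * g"
      using powr_le_of_radius_estimate[OF a w r est[OF r True]] rn by (simp add: c_def)
    from powr_le_at_fitting_radius[OF a g r r_le less_imp_le[OF m] c al ap sq_bound[OF r order.refl]]
    have "a powr (p + al) \<le> 8 powr (al / 2) * m powr (al / 2) * (c * X)"
      by (simp add: X_def ac_simps)
    also have "\<dots> \<le> 8 powr (al / 2) * m powr (al / 2) * (c * X + Y)"
      using Y by (intro mult_left_mono) auto
    finally show ?thesis .
  next
    case False
    have "R / (d * R) = 1 / d"
      using R by simp
    with sq_bound[of "d * R"] False d R have "a\<^sup>2 \<le> 8 * m * (1 / d) powr n"
      by simp
    from powr_le_at_large_radius[OF a d less_imp_le[OF m] less_imp_le[OF n] al this]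
    have "a powr (p + al) \<le> 8 powr (al / 2) * m powr (al / 2) * Y"
      by (simp add: Y_def)
    also have "\<dots> \<le> 8 powr (al / 2) * m powr (al / 2) * (c * X + Y)"
      using c X by (intro mult_left_mono) auto
    finally show ?thesis .
  qed
  also have "\<dots> \<le> 8 powr (al / 2) * m powr (al / 2) * ((1 + c) * (X + Y))"
    using c X Y by (intro mult_left_mono) (auto simp: algebra_simps)
  finally show ?thesis
    by (simp add: c_def X_def Y_def ac_simps)
qed

lemma emeasure_le_cmult_nn_integral:
  assumes "A \<in> sets M" "f \<in> borel_measurable M" "\<And>y. y \<in> A \<Longrightarrow> 1 \<le> c * f y"
  shows "emeasure M A \<le> c * (\<integral>\<^sup>+y. f y \<partial>M)"
proof -
  have "emeasure M A = (\<integral>\<^sup>+y. indicator A y \<partial>M)"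
    using assms(1) by simp
  also have "\<dots> \<le> (\<integral>\<^sup>+y. c * f y \<partial>M)"
    using assms(3) by (intro nn_integral_mono) (auto simp: indicator_def)
  also have "\<dots> = c * (\<integral>\<^sup>+y. f y \<partial>M)"
    using assms(2) by (rule nn_integral_cmult)
  finally show ?thesis .
qed

lemma emeasure_cball_le_oscillation_plus_mass:
  fixes v :: "'a::euclidean_space \<Rightarrow> real"
  assumes v[measurable]: "v \<in> borel_measurable borel" and K[measurable]: "K \<in> sets borel"
    and sub: "cball x r \<subseteq> K" and vx: "v x \<noteq> 0" and p: "0 \<le> p" and e: "0 \<le> e"
  shows "emeasure lborel (cball x r) \<le>
      ennreal ((2 / \<bar>v x\<bar>) powr p * r powr e)
        * (\<integral>\<^sup>+y. ennreal (\<bar>v x - v y\<bar> powr p / norm (x - y) powr e) * indicator K y \<partial>lborel)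
    + ennreal (4 / (v x)\<^sup>2) * (\<integral>\<^sup>+y. ennreal ((v y)\<^sup>2) * indicator K y \<partial>lborel)"
proof -
  define a where "a = \<bar>v x\<bar>"
  have a: "0 < a"
    using vx by (simp add: a_def)
  define E1 where "E1 = {y \<in> cball x r. a / 2 \<le> \<bar>v x - v y\<bar>}"
  define E2 where "E2 = {y \<in> cball x r. a / 2 \<le> \<bar>v y\<bar>}"
  have [measurable]: "cball x r \<in> sets borel"
    by (simp add: borel_closed)
  have [measurable]: "E1 \<in> sets borel" "E2 \<in> sets borel"
    unfolding E1_def E2_def by measurable
  have osc: "1 \<le> ennreal ((2 / a) powr p * r powr e)
      * (ennreal (\<bar>v x - v y\<bar> powr p / norm (x - y) powr e) * indicator K y)" if "y \<in> E1" for y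
  proof -
    have y: "norm (x - y) \<le> r" "a / 2 \<le> \<bar>v x - v y\<bar>" "y \<in> K"
      using that sub by (auto simp: E1_def dist_norm)
    then have xy: "0 < norm (x - y)"
      using a by auto
    have "1 * 1 \<le> (2 * \<bar>v x - v y\<bar> / a) powr p * (r / norm (x - y)) powr e"
      using y xy a p e by (intro mult_mono ge_one_powr_ge_zero) (auto simp: field_simps)
    also have "\<dots> = (2 / a) powr p * r powr e * (\<bar>v x - v y\<bar> powr p / norm (x - y) powr e)"
      using a xy y by (simp add: powr_divide powr_mult)
    finally show ?thesis
      using y a by (simp flip: ennreal_mult)
  qed
  have mass: "1 \<le> ennreal (4 / a\<^sup>2) * (ennreal ((v y)\<^sup>2) * indicator K y)" if "y \<in> E2" for y
  proof -
    have y: "a / 2 \<le> \<bar>v y\<bar>" "y \<in> K"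
      using that sub by (auto simp: E2_def)
    then have "(a / 2)\<^sup>2 \<le> (v y)\<^sup>2"
      using a by (metis abs_le_square_iff abs_of_pos half_gt_zero)
    then have "1 \<le> 4 / a\<^sup>2 * (v y)\<^sup>2"
      using a by (simp add: field_simps)
    then show ?thesis
      using y by (simp flip: ennreal_mult)
  qed
  have "a / 2 \<le> \<bar>v x - v y\<bar> \<or> a / 2 \<le> \<bar>v y\<bar>" for y
    unfolding a_def by arith
  then have "cball x r \<subseteq> E1 \<union> E2"
    by (auto simp: E1_def E2_def)
  then have "emeasure lborel (cball x r) \<le> emeasure lborel (E1 \<union> E2)"
    by (intro emeasure_mono) auto
  also have "\<dots> \<le> emeasure lborel E1 + emeasure lborel E2"
    by (intro emeasure_subadditive) auto
  also have "\<dots> \<le> ennreal ((2 / a) powr p * r powr e)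
        * (\<integral>\<^sup>+y. ennreal (\<bar>v x - v y\<bar> powr p / norm (x - y) powr e) * indicator K y \<partial>lborel)
    + ennreal (4 / a\<^sup>2) * (\<integral>\<^sup>+y. ennreal ((v y)\<^sup>2) * indicator K y \<partial>lborel)"
    using osc mass by (intro add_mono emeasure_le_cmult_nn_integral) auto
  finally show ?thesis
    by (simp add: a_def)
qed

lemma ball_vol_le_oscillation_plus_mass:
  fixes v :: "'a::euclidean_space \<Rightarrow> real"
  assumes v: "v \<in> borel_measurable borel" and K: "K \<in> sets borel"
    and sub: "cball x r \<subseteq> K" and vx: "v x \<noteq> 0" and p: "0 \<le> p" and e: "0 \<le> e" and r: "0 < r"
    and g: "(\<integral>\<^sup>+y. ennreal (\<bar>v x - v y\<bar> powr p / norm (x - y) powr e) * indicator K y \<partial>lborel) = ennreal g"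
      "0 \<le> g"
    and q: "(\<integral>\<^sup>+y. ennreal ((v y)\<^sup>2) * indicator K y \<partial>lborel) = ennreal q" "0 \<le> q"
  shows "unit_ball_vol DIM('a) * r powr DIM('a) \<le> (2 / \<bar>v x\<bar>) powr p * r powr e * g + 4 * q / \<bar>v x\<bar>\<^sup>2"
proof -
  from emeasure_cball_le_oscillation_plus_mass[OF v K sub vx p e]
  have "ennreal (unit_ball_vol DIM('a) * r powr DIM('a))
      \<le> ennreal ((2 / \<bar>v x\<bar>) powr p * r powr e) * ennreal g + ennreal (4 / (v x)\<^sup>2) * ennreal q"
    using r by (simp add: emeasure_cball g q powr_realpow)
  moreover have "0 < unit_ball_vol DIM('a) * r powr DIM('a)"
    using r by simp
  ultimately show ?thesis
    using g q by (simp add: ennreal_le_iff2 flip: ennreal_mult ennreal_plus)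
qed

definition interpolation_const :: "real \<Rightarrow> real \<Rightarrow> real \<Rightarrow> real" where
  "interpolation_const n p al = 8 powr (al / 2) * (1 + 2 powr (p + 1) / unit_ball_vol n)"

lemma interpolation_const_pos: "0 \<le> n \<Longrightarrow> 0 < interpolation_const n p al"
  by (simp add: interpolation_const_def add_pos_nonneg)

lemma pointwise_interpolation:
  fixes v :: "'a::euclidean_space \<Rightarrow> real"
  defines "n \<equiv> real DIM('a)"
  assumes v[measurable]: "v \<in> borel_measurable borel" and K[measurable]: "K \<in> sets borel"
    and R: "0 < R" and d: "0 < d" "d \<le> 1" and p: "0 \<le> p" and al: "0 \<le> al" "al * n / 2 \<le> s * p"
    and ball: "cball x (d * R) \<subseteq> K" and vx: "v x \<noteq> 0"
    and Q: "0 < (\<integral>\<^sup>+y. ennreal ((v y)\<^sup>2) * indicator K y \<partial>lborel)"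
      "(\<integral>\<^sup>+y. ennreal ((v y)\<^sup>2) * indicator K y \<partial>lborel) \<le> ennreal (m * (unit_ball_vol n * R powr n))"
  shows "ennreal (\<bar>v x\<bar> powr (p + al)) \<le>
      ennreal (interpolation_const n p al * m powr (al / 2) * R powr (s * p))
        * (\<integral>\<^sup>+y. ennreal (\<bar>v x - v y\<bar> powr p / norm (x - y) powr (n + s * p)) * indicator K y \<partial>lborel)
    + ennreal (interpolation_const n p al * m powr (al / 2) / d powr (n + s * p)) * ennreal (\<bar>v x\<bar> powr p)"
proof -
  define w where "w = unit_ball_vol n"
  define C where "C = interpolation_const n p al"
  define G where "G = (\<integral>\<^sup>+y. ennreal (\<bar>v x - v y\<bar> powr p / norm (x - y) powr (n + s * p)) * indicator K y \<partial>lborel)"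
  obtain q where q: "(\<integral>\<^sup>+y. ennreal ((v y)\<^sup>2) * indicator K y \<partial>lborel) = ennreal q" "0 < q"
    using Q by (cases "\<integral>\<^sup>+y. ennreal ((v y)\<^sup>2) * indicator K y \<partial>lborel") (auto simp: top_unique)
  have n: "0 < n" and w: "0 < w"
    by (simp_all add: n_def w_def)
  have q_le: "q \<le> m * (w * R powr n)"
    using Q(2) q by (simp add: w_def ennreal_le_iff2)
  have "0 < m * (w * R powr n)" "0 < w * R powr n"
    using q q_le w R by auto
  then have m: "0 < m"
    by (simp add: zero_less_mult_iff)
  have C: "0 < C"
    using n by (simp add: C_def interpolation_const_pos)
  have "0 \<le> al * n / 2"
    using al n by simp
  then have sp: "0 \<le> s * p"
    using al by linarith
  show ?thesis
  proof (cases "G = \<infinity>")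
    case True
    then show ?thesis
      using C m R by (simp add: G_def[symmetric] C_def[symmetric] ennreal_mult_top)
  next
    case False
    then obtain g where g: "G = ennreal g" "0 \<le> g"
      by (cases G) auto
    have est: "w * r powr n \<le> (2 / \<bar>v x\<bar>) powr p * r powr (n + s * p) * g + 4 * q / \<bar>v x\<bar>\<^sup>2"
      if r: "0 < r" "r \<le> d * R" for r
      using ball_vol_le_oscillation_plus_mass[OF v K order.trans[OF subset_cball[OF r(2)] ball] vx p _ r(1)]
        g q sp n by (simp add: w_def n_def G_def)
    have "\<bar>v x\<bar> powr (p + al) \<le> C * m powr (al / 2) * (R powr (s * p) * g + \<bar>v x\<bar> powr p / d powr (n + s * p))"
      unfolding C_def interpolation_const_def w_def[symmetric]
      by (rule powr_interpolation_of_radius_estimates[OF _ q(2) g(2) w R d n al q_le est]) (use vx in auto)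
    then have "ennreal (\<bar>v x\<bar> powr (p + al))
        \<le> ennreal (C * m powr (al / 2) * R powr (s * p) * g + C * m powr (al / 2) / d powr (n + s * p) * \<bar>v x\<bar> powr p)"
      by (intro ennreal_leI) (simp add: algebra_simps)
    also have "\<dots> = ennreal (C * m powr (al / 2) * R powr (s * p)) * G
        + ennreal (C * m powr (al / 2) / d powr (n + s * p)) * ennreal (\<bar>v x\<bar> powr p)"
      using C m g by (simp add: g(1) flip: ennreal_mult ennreal_plus)
    finally show ?thesis
      unfolding G_def C_def .
  qed
qed

lemma nn_integral_indicator_le_lincomb:
  fixes f g h :: "'a \<Rightarrow> ennreal"
  assumes [measurable]: "f \<in> borel_measurable M" "g \<in> borel_measurable M" "A \<in> sets M"
    and le: "AE x in M. x \<in> A \<longrightarrow> h x \<le> a * f x + b * g x"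
  shows "(\<integral>\<^sup>+x. h x * indicator A x \<partial>M)
    \<le> a * (\<integral>\<^sup>+x. f x * indicator A x \<partial>M) + b * (\<integral>\<^sup>+x. g x * indicator A x \<partial>M)"
proof -
  have "(\<integral>\<^sup>+x. h x * indicator A x \<partial>M)
      \<le> (\<integral>\<^sup>+x. a * (f x * indicator A x) + b * (g x * indicator A x) \<partial>M)"
    using le by (intro nn_integral_mono_AE) (auto elim!: eventually_mono split: split_indicator)
  also have "\<dots> = a * (\<integral>\<^sup>+x. f x * indicator A x \<partial>M) + b * (\<integral>\<^sup>+x. g x * indicator A x \<partial>M)"
    by (simp add: nn_integral_add nn_integral_cmult)
  finally show ?thesis .
qed

lemma AE_pointwise_interpolation:
  fixes v :: "'a::euclidean_space \<Rightarrow> real" and x0 :: 'a and R :: real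
  defines "n \<equiv> real DIM('a)" and "K \<equiv> ball x0 R"
  assumes v[measurable]: "v \<in> borel_measurable borel"
    and R: "0 < R" and d: "0 < d" "d \<le> 1" and p: "0 \<le> p" and al: "0 \<le> al" "al * n / 2 \<le> s * p"
    and supp: "S \<subseteq> ball x0 ((1 - d) * R)" "AE x in lborel. x \<in> K - S \<longrightarrow> v x = 0"
    and mass: "(\<integral>\<^sup>+x. ennreal ((v x)\<^sup>2) * indicator K x \<partial>lborel) \<le> ennreal (m * measure lborel K)"
  shows "AE x in lborel. x \<in> K \<longrightarrow> ennreal (\<bar>v x\<bar> powr (p + al)) \<le>
      ennreal (interpolation_const n p al * m powr (al / 2) * R powr (s * p))
        * (\<integral>\<^sup>+y. ennreal (\<bar>v x - v y\<bar> powr p / norm (x - y) powr (n + s * p)) * indicator K y \<partial>lborel)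
    + ennreal (interpolation_const n p al * m powr (al / 2) / d powr (n + s * p)) * ennreal (\<bar>v x\<bar> powr p)"
    (is "AE x in lborel. x \<in> K \<longrightarrow> _ \<le> ?rhs x")
proof -
  define Q where "Q = (\<integral>\<^sup>+x. ennreal ((v x)\<^sup>2) * indicator K x \<partial>lborel)"
  have [measurable]: "K \<in> sets borel"
    by (simp add: K_def)
  have "AE x in lborel. x \<in> K \<longrightarrow> v x = 0" if "Q = 0"
  proof -
    have "AE x in lborel. ennreal ((v x)\<^sup>2) * indicator K x = 0"
      using that unfolding Q_def by (subst (asm) nn_integral_0_iff_AE) measurable
    then show ?thesis
      by (auto elim!: eventually_mono simp: indicator_def)
  qed
  with supp(2) have "AE x in lborel. x \<in> K \<longrightarrow> v x \<noteq> 0 \<longrightarrow> x \<in> S \<and> 0 < Q"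
    by (cases "Q = 0") (auto elim!: eventually_mono simp: zero_less_iff_neq_zero)
  then show ?thesis
  proof (rule eventually_mono, intro impI)
    fix x
    assume "x \<in> K \<longrightarrow> v x \<noteq> 0 \<longrightarrow> x \<in> S \<and> 0 < Q" and "x \<in> K"
    show "ennreal (\<bar>v x\<bar> powr (p + al)) \<le> ?rhs x"
    proof (cases "v x = 0")
      case False
      with \<open>x \<in> K \<longrightarrow> _\<close> \<open>x \<in> K\<close> have "x \<in> S" "0 < Q"
        by auto
      then have "dist x x0 + d * R < R"
        using supp(1) by (auto simp: dist_commute algebra_simps)
      then have "cball x (d * R) \<subseteq> K"
        by (simp add: K_def cball_subset_ball_iff)
      moreover have "Q \<le> ennreal (m * (unit_ball_vol n * R powr n))"
        using mass R by (simp add: Q_def K_def n_def content_ball powr_realpow)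
      ultimately show ?thesis
        using pointwise_interpolation[OF v _ R d p al[unfolded n_def] _ False] \<open>0 < Q\<close>
        by (simp add: Q_def n_def)
    qed simp
  qed
qed

lemma spatial_interpolation:
  fixes v :: "'a::euclidean_space \<Rightarrow> real" and x0 :: 'a and R :: real
  defines "n \<equiv> real DIM('a)" and "K \<equiv> ball x0 R"
  assumes v[measurable]: "v \<in> borel_measurable borel"
    and R: "0 < R" and d: "0 < d" "d \<le> 1" and p: "0 \<le> p" and al: "0 \<le> al" "al * n / 2 \<le> s * p"
    and supp: "S \<subseteq> ball x0 ((1 - d) * R)" "AE x in lborel. x \<in> K - S \<longrightarrow> v x = 0"
    and mass: "(\<integral>\<^sup>+x. ennreal ((v x)\<^sup>2) * indicator K x \<partial>lborel) \<le> ennreal (m * measure lborel K)"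
  shows "(\<integral>\<^sup>+x. ennreal (\<bar>v x\<bar> powr (p + al)) * indicator K x \<partial>lborel) \<le>
      ennreal (interpolation_const n p al * m powr (al / 2) * R powr (s * p))
        * (\<integral>\<^sup>+x. (\<integral>\<^sup>+y. ennreal (\<bar>v x - v y\<bar> powr p / norm (x - y) powr (n + s * p))
              * indicator K y \<partial>lborel) * indicator K x \<partial>lborel)
    + ennreal (interpolation_const n p al * m powr (al / 2) / d powr (n + s * p))
        * (\<integral>\<^sup>+x. ennreal (\<bar>v x\<bar> powr p) * indicator K x \<partial>lborel)"
proof (rule nn_integral_indicator_le_lincomb)
  have [measurable]: "(\<lambda>z. v (fst z)) \<in> borel_measurable (lborel \<Otimes>\<^sub>M lborel)"
    "(\<lambda>z. v (snd z)) \<in> borel_measurable (lborel \<Otimes>\<^sub>M lborel)" "K \<in> sets borel"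
    by (measurable, simp add: K_def)
  show "(\<lambda>x. \<integral>\<^sup>+y. ennreal (\<bar>v x - v y\<bar> powr p / norm (x - y) powr (n + s * p)) * indicator K y \<partial>lborel)
      \<in> borel_measurable lborel"
    by measurable
  show "(\<lambda>x. ennreal (\<bar>v x\<bar> powr p)) \<in> borel_measurable lborel" "K \<in> sets lborel"
    by measurable
  show "AE x in lborel. x \<in> K \<longrightarrow> ennreal (\<bar>v x\<bar> powr (p + al)) \<le>
      ennreal (interpolation_const n p al * m powr (al / 2) * R powr (s * p))
        * (\<integral>\<^sup>+y. ennreal (\<bar>v x - v y\<bar> powr p / norm (x - y) powr (n + s * p)) * indicator K y \<partial>lborel)
    + ennreal (interpolation_const n p al * m powr (al / 2) / d powr (n + s * p)) * ennreal (\<bar>v x\<bar> powr p)"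
    using AE_pointwise_interpolation[OF v R d p al[unfolded n_def] supp[unfolded K_def] mass[unfolded K_def]]
    by (simp add: K_def n_def)
qed

lemma par_Lq_cong:
  assumes "\<And>x t. x \<in> K \<Longrightarrow> t \<in> I \<Longrightarrow> u x t = u' x t"
  shows "par_Lq u K I q = par_Lq u' K I q"
  unfolding par_Lq_def using assms
  by (intro nn_integral_cong) (auto split: split_indicator intro!: nn_integral_cong)

lemma par_gagliardo_cong:
  assumes "\<And>x t. x \<in> K \<Longrightarrow> t \<in> I \<Longrightarrow> u x t = u' x t"
  shows "par_gagliardo u K I s p = par_gagliardo u' K I s p"
  unfolding par_gagliardo_def using assms
  by (intro nn_integral_cong) (auto split: split_indicator intro!: nn_integral_cong)

lemma esssup_cong:
  assumes "\<And>x. x \<in> space M \<Longrightarrow> f x = g x"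
  shows "esssup M f = esssup M g"
proof -
  have "f \<in> borel_measurable M \<longleftrightarrow> g \<in> borel_measurable M"
    using assms by (rule measurable_cong)
  moreover have "Limsup (ae_filter M) f = Limsup (ae_filter M) g"
    using assms by (intro Limsup_eq AE_I2)
  ultimately show ?thesis
    by (simp add: esssup_def)
qed

lemma par_esssup_L2_avg_cong:
  assumes "\<And>x t. x \<in> K \<Longrightarrow> t \<in> I \<Longrightarrow> u x t = u' x t"
  shows "par_esssup_L2_avg u K I = par_esssup_L2_avg u' K I"
  unfolding par_esssup_L2_avg_def using assms
  by (intro esssup_cong arg_cong2[where f = "(/)"] nn_integral_cong)
    (auto simp: space_restrict_space split: split_indicator)

lemma AE_L2_le_esssup_avg:
  assumes I: "I \<in> sets borel" and K: "0 < measure lborel K"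
    and fin: "par_esssup_L2_avg u K I < \<infinity>"
  shows "AE t in lborel. t \<in> I \<longrightarrow> (\<integral>\<^sup>+x. ennreal ((u x t)\<^sup>2) * indicator K x \<partial>lborel)
    \<le> ennreal (enn2real (par_esssup_L2_avg u K I) * measure lborel K)"
proof -
  define k where "k = measure lborel K"
  have "AE t in restrict_space lborel I.
      (\<integral>\<^sup>+x. ennreal ((u x t)\<^sup>2) * indicator K x \<partial>lborel) / ennreal k \<le> par_esssup_L2_avg u K I"
    unfolding par_esssup_L2_avg_def k_def by (rule esssup_AE)
  then have "AE t in lborel. t \<in> I \<longrightarrow>
      (\<integral>\<^sup>+x. ennreal ((u x t)\<^sup>2) * indicator K x \<partial>lborel) / ennreal k \<le> par_esssup_L2_avg u K I"
    using I by (subst (asm) AE_restrict_space_iff) auto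
  then show ?thesis
  proof (rule eventually_mono, intro impI)
    fix t
    let ?Q = "\<integral>\<^sup>+x. ennreal ((u x t)\<^sup>2) * indicator K x \<partial>lborel"
    assume "t \<in> I \<longrightarrow> ?Q / ennreal k \<le> par_esssup_L2_avg u K I" "t \<in> I"
    then have "?Q / ennreal k * ennreal k \<le> par_esssup_L2_avg u K I * ennreal k"
      by (simp add: mult_right_mono)
    then show "?Q \<le> ennreal (enn2real (par_esssup_L2_avg u K I) * measure lborel K)"
      using K fin by (simp add: k_def ennreal_divide_times ennreal_times_divide ennreal_mult less_top)
  qed
qed

lemma parabolic_interpolation:
  fixes u :: "'a::euclidean_space \<Rightarrow> real \<Rightarrow> real" and x0 :: 'a and R :: real
  defines "n \<equiv> real DIM('a)" and "K \<equiv> ball x0 R"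
  assumes u: "(\<lambda>z. u (fst z) (snd z)) \<in> borel_measurable (lborel \<Otimes>\<^sub>M lborel)"
    and I[measurable]: "I \<in> sets borel"
    and R: "0 < R" and d: "0 < d" "d \<le> 1" and p: "0 \<le> p" and al: "0 \<le> al" "al * n / 2 \<le> s * p"
    and supp: "AE t in lborel. t \<in> I \<longrightarrow>
      (\<exists>S. S \<subseteq> ball x0 ((1 - d) * R) \<and> (AE x in lborel. x \<in> K - S \<longrightarrow> u x t = 0))"
    and mass: "AE t in lborel. t \<in> I \<longrightarrow>
      (\<integral>\<^sup>+x. ennreal ((u x t)\<^sup>2) * indicator K x \<partial>lborel) \<le> ennreal (m * measure lborel K)"
  shows "par_Lq u K I (p + al) \<le>
      ennreal (interpolation_const n p al * m powr (al / 2) * R powr (s * p)) * par_gagliardo u K I s p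
    + ennreal (interpolation_const n p al * m powr (al / 2) / d powr (n + s * p)) * par_Lq u K I p"
proof -
  define U where "U = (\<lambda>z. u (fst z) (snd z))"
  have u_eq: "u x t = U (x, t)" for x t
    by (simp add: U_def)
  have [measurable]: "U \<in> borel_measurable (lborel \<Otimes>\<^sub>M lborel)" "K \<in> sets borel"
    using u by (simp_all add: U_def K_def)
  have v: "(\<lambda>x. u x t) \<in> borel_measurable borel" for t
  proof -
    have "(\<lambda>x. U (x, t)) \<in> borel_measurable lborel"
      by measurable
    then show ?thesis
      by (simp add: u_eq)
  qed
  define \<Phi> where "\<Phi> t = (\<integral>\<^sup>+x. ennreal (\<bar>u x t\<bar> powr (p + al)) * indicator K x \<partial>lborel)" for t
  define G where "G t = (\<integral>\<^sup>+x. (\<integral>\<^sup>+y. ennreal (\<bar>u x t - u y t\<bar> powr p / norm (x - y) powr (real DIM('a) + s * p))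
      * indicator K y \<partial>lborel) * indicator K x \<partial>lborel)" for t
  define L where "L t = (\<integral>\<^sup>+x. ennreal (\<bar>u x t\<bar> powr p) * indicator K x \<partial>lborel)" for t
  define A where "A = ennreal (interpolation_const n p al * m powr (al / 2) * R powr (s * p))"
  define B where "B = ennreal (interpolation_const n p al * m powr (al / 2) / d powr (n + s * p))"
  have [measurable]: "G \<in> borel_measurable lborel" "L \<in> borel_measurable lborel"
    unfolding G_def L_def by (simp_all only: u_eq) measurable
  have "AE t in lborel. t \<in> I \<longrightarrow> \<Phi> t \<le> A * G t + B * L t"
    using supp mass
  proof eventually_elim
    case (elim t)
    show ?case
    proof
      assume "t \<in> I"
      with elim obtain S where "S \<subseteq> ball x0 ((1 - d) * R)" "AE x in lborel. x \<in> ball x0 R - S \<longrightarrow> u x t = 0"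
        and "(\<integral>\<^sup>+x. ennreal ((u x t)\<^sup>2) * indicator (ball x0 R) x \<partial>lborel) \<le> ennreal (m * measure lborel (ball x0 R))"
        by (auto simp: K_def)
      from spatial_interpolation[OF v R d p al[unfolded n_def] this]
      show "\<Phi> t \<le> A * G t + B * L t"
        by (simp add: \<Phi>_def G_def L_def A_def B_def K_def n_def)
    qed
  qed
  then have "(\<integral>\<^sup>+t. \<Phi> t * indicator I t \<partial>lborel)
      \<le> A * (\<integral>\<^sup>+t. G t * indicator I t \<partial>lborel) + B * (\<integral>\<^sup>+t. L t * indicator I t \<partial>lborel)"
    by (intro nn_integral_indicator_le_lincomb) measurable
  then show ?thesis
    unfolding \<Phi>_def G_def L_def A_def B_def par_Lq_def par_gagliardo_def .
qed

lemma par_Lq_kappa_le_of_borel: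
  fixes u :: "'a::euclidean_space \<Rightarrow> real \<Rightarrow> real" and x0 :: 'a and R :: real
  defines "K \<equiv> ball x0 R"
  assumes s: "0 < s" and p: "0 < p" and R: "0 < R" and d: "0 < d" "d \<le> 1"
    and u: "(\<lambda>z. u (fst z) (snd z)) \<in> borel_measurable (lborel \<Otimes>\<^sub>M lborel)" and I: "I \<in> sets borel"
    and fin: "par_Lq u K I p < \<infinity>" "par_gagliardo u K I s p < \<infinity>" "par_esssup_L2_avg u K I < \<infinity>"
    and supp: "AE t in lborel. t \<in> I \<longrightarrow>
      (\<exists>S. S \<subseteq> ball x0 ((1 - d) * R) \<and> (AE x in lborel. x \<in> K - S \<longrightarrow> u x t = 0))"
  shows "par_Lq u K I (kappa DIM('a) s p * p)
    \<le> ennreal (interpolation_const DIM('a) p (kappa_gain DIM('a) s p)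
        * (R powr (s * p) * enn2real (par_gagliardo u K I s p)
           + 1 / d powr (real DIM('a) + s * p) * enn2real (par_Lq u K I p))
        * enn2real (par_esssup_L2_avg u K I)
            powr ((kappa_star DIM('a) s p - 1) / kappa_star DIM('a) s p))"
proof -
  define n where "n = real DIM('a)"
  define al where "al = kappa_gain DIM('a) s p"
  define C where "C = interpolation_const n p al"
  define m where "m = enn2real (par_esssup_L2_avg u K I)"
  define g where "g = enn2real (par_gagliardo u K I s p)"
  define l where "l = enn2real (par_Lq u K I p)"
  have al: "0 \<le> al" "al * n / 2 \<le> s * p"
    using kappa_gain_pos[OF s p] kappa_gain_dim_le[OF s p] by (simp_all add: al_def n_def less_imp_le)
  have exponent: "(kappa_star DIM('a) s p - 1) / kappa_star DIM('a) s p = al / 2"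
    using kappa_star_gt_1[OF s p, of "DIM('a)"] by (simp add: al_def kappa_gain_def field_simps)
  have "0 < measure lborel K"
    using R by (simp add: K_def content_ball)
  from parabolic_interpolation[OF u I R d _ al(1) al(2)[unfolded n_def] supp[unfolded K_def]
      AE_L2_le_esssup_avg[OF I this fin(3), unfolded K_def]] p
  have "par_Lq u K I (p + al) \<le> ennreal (C * m powr (al / 2) * R powr (s * p)) * ennreal g
      + ennreal (C * m powr (al / 2) / d powr (n + s * p)) * ennreal l"
    using fin(1,2) by (simp add: K_def C_def n_def m_def g_def l_def less_top)
  also have "\<dots> = ennreal (C * (R powr (s * p) * g + 1 / d powr (n + s * p) * l) * m powr (al / 2))"
  proof -
    have "0 < C"
      by (simp add: C_def n_def interpolation_const_pos)
    then have "ennreal (C * m powr (al / 2) * R powr (s * p)) * ennreal g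
        + ennreal (C * m powr (al / 2) / d powr (n + s * p)) * ennreal l
        = ennreal (C * m powr (al / 2) * R powr (s * p) * g + C * m powr (al / 2) / d powr (n + s * p) * l)"
      by (simp add: g_def l_def ennreal_plus flip: ennreal_mult)
    then show ?thesis
      by (simp add: algebra_simps)
  qed
  finally show ?thesis
    unfolding exponent kappa_mult_eq[OF s p] al_def[symmetric] n_def[symmetric] C_def[symmetric]
      m_def[symmetric] g_def[symmetric] l_def[symmetric] .
qed

lemma par_Lq_kappa_le:
  fixes u :: "'a::euclidean_space \<Rightarrow> real \<Rightarrow> real" and x0 :: 'a and R t1 t2 :: real
  defines "K \<equiv> ball x0 R" and "I \<equiv> {t1<..<t2}"
  assumes s: "0 < s" and p: "0 < p" and R: "0 < R" and d: "0 < d" "d < 1"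
    and u: "(\<lambda>z. u (fst z) (snd z)) \<in> borel_measurable (restrict_space borel (K \<times> I))"
    and fin: "par_Lq u K I p < \<infinity>" "par_gagliardo u K I s p < \<infinity>" "par_esssup_L2_avg u K I < \<infinity>"
    and supp: "AE t in lborel. t \<in> I \<longrightarrow>
      (\<exists>S. compact S \<and> S \<subseteq> ball x0 ((1 - d) * R) \<and> (AE x in lborel. x \<in> K - S \<longrightarrow> u x t = 0))"
  shows "par_Lq u K I (kappa DIM('a) s p * p)
    \<le> ennreal (interpolation_const DIM('a) p (kappa_gain DIM('a) s p)
        * (R powr (s * p) * enn2real (par_gagliardo u K I s p)
           + 1 / d powr (real DIM('a) + s * p) * enn2real (par_Lq u K I p))
        * enn2real (par_esssup_L2_avg u K I)
            powr ((kappa_star DIM('a) s p - 1) / kappa_star DIM('a) s p))"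
proof -
  \<comment> \<open>Extending u by zero off K \<times> I makes it Borel measurable on the whole space-time.\<close>
  define U where "U x t = indicator (K \<times> I) (x, t) * u x t" for x t
  have agree: "U x t = u x t" if "x \<in> K" "t \<in> I" for x t
    using that by (simp add: U_def)
  have "K \<times> I \<inter> space borel \<in> sets borel"
    by (simp add: K_def I_def open_Times borel_open)
  from borel_measurable_restrict_space_iff[OF this, THEN iffD1, OF u]
  have U_meas: "(\<lambda>z. U (fst z) (snd z)) \<in> borel_measurable (lborel \<Otimes>\<^sub>M lborel)"
    by (simp add: U_def lborel_prod)
  have supp_U: "AE t in lborel. t \<in> I \<longrightarrow>
      (\<exists>S. S \<subseteq> ball x0 ((1 - d) * R) \<and> (AE x in lborel. x \<in> K - S \<longrightarrow> U x t = 0))"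
    using supp by (auto elim!: eventually_mono simp: agree)
  have eqs: "par_Lq U K I q = par_Lq u K I q" "par_gagliardo U K I s p = par_gagliardo u K I s p"
    "par_esssup_L2_avg U K I = par_esssup_L2_avg u K I" for q
    by (auto intro!: par_Lq_cong par_gagliardo_cong par_esssup_L2_avg_cong agree)
  show ?thesis
    using par_Lq_kappa_le_of_borel[OF s p R d(1) _ U_meas _ _ _ _ supp_U[unfolded K_def]] d fin eqs
    unfolding K_def I_def by simp
qed

theorem propositionA3:
  fixes s p :: real
  assumes "0 < s" "s < 1" "1 \<le> p"
  shows "\<exists>C>0. \<forall>(x0::'a::euclidean_space) R d t1 t2 (u::'a \<Rightarrow> real \<Rightarrow> real).
    0 < R \<and> 0 < d \<and> d < 1 \<and> t1 < t2
    \<and> (\<lambda>z. u (fst z) (snd z)) \<in> borel_measurable (restrict_space borel (ball x0 R \<times> {t1<..<t2}))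
    \<and> par_Lq u (ball x0 R) {t1<..<t2} p < \<infinity>
    \<and> par_gagliardo u (ball x0 R) {t1<..<t2} s p < \<infinity>
    \<and> par_esssup_L2_avg u (ball x0 R) {t1<..<t2} < \<infinity>
    \<and> (AE t in lborel. t \<in> {t1<..<t2} \<longrightarrow>
         (\<exists>S. compact S \<and> S \<subseteq> ball x0 ((1 - d) * R) \<and>
              (AE x in lborel. x \<in> ball x0 R - S \<longrightarrow> u x t = 0)))
    \<longrightarrow> par_Lq u (ball x0 R) {t1<..<t2} (kappa DIM('a) s p * p)
        \<le> ennreal (C * (R powr (s * p) * enn2real (par_gagliardo u (ball x0 R) {t1<..<t2} s p)
                   + 1 / d powr (real DIM('a) + s * p) * enn2real (par_Lq u (ball x0 R) {t1<..<t2} p))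
             * enn2real (par_esssup_L2_avg u (ball x0 R) {t1<..<t2})
                 powr ((kappa_star DIM('a) s p - 1) / kappa_star DIM('a) s p))"
proof -
  have s: "0 < s" and p: "0 < p"
    using assms by auto
  show ?thesis
    by (intro exI[of _ "interpolation_const DIM('a) p (kappa_gain DIM('a) s p)"]
          conjI allI impI interpolation_const_pos, simp)
       (elim conjE, rule par_Lq_kappa_le[OF s p], assumption+)
qed

end
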